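(* Let $\rho,k\ge 1$ and let $\mathcal{F}$ be a finite family of $\rho$-fat objects in the plane with size-ratio at most $k$, and let $G$ be its intersection graph. Then $\chi_{CF}^{pn}(G)=O(k^2\rho^2)$ and $\chi_{CF}^{cn}(G)=O(\rho^2\log k)$ (for $k\ge2$ in the latter), where the implied constants are absolute.
   Context: A simple Jordan region $C$ in the plane is $\rho$-fat if there exist $x\in C$ and discs $A,B$ centered at $x$ with radii $r_A,r_B$ such that $A\subseteq C\subseteq B$ and $r_B/r_A\le\rho$. The size of a $\rho$-fat object $C$ is the maximum of $r_A$ over all such pairs $A,B$. The size-ratio of $\mathcal{F}$ is $\max_{C_1,C_2\in\mathcal{F}}\mathrm{size}(C_1)/\mathrm{size}(C_2)$. The intersection graph of $\mathcal{F}$ has vertex set $\mathcal{F}$, with distinct $C_1,C_2$ adjacent iff $C_1\cap C_2\neq\emptyset$. A coloring of $V(G)$ is a pointed (resp. closed) CF-coloring if for every $v$ with $N_G(v)\neq\emptyset$ (resp. for every $v$), the set $N_G(v)=\{u:\{u,v\}\in E(G)\}$ (resp. $N_G[v]=N_G(v)\cup\{v\}$) contains a vertex whose color differs from the colors of all other vertices of that set; $\chi_{CF}^{pn}(G)$ and $\chi_{CF}^{cn}(G)$ denote the minimum numbers of colors in such colorings. *)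

theory Defs
  imports "HOL-Analysis.Analysis"
begin

text \<open>The plane is modelled as the complex numbers. A simple Jordan region is a
closed Jordan curve together with its interior (bounded complementary component).\<close>

definition jordan_region :: "complex set \<Rightarrow> bool" where
  "jordan_region C \<longleftrightarrow>
     (\<exists>g. simple_path g \<and> pathfinish g = pathstart g \<and>
          C = path_image g \<union> inside (path_image g))"

definition fat_witness :: "real \<Rightarrow> complex set \<Rightarrow> complex \<Rightarrow> real \<Rightarrow> real \<Rightarrow> bool" where
  "fat_witness \<rho> C x rA rB \<longleftrightarrow>
     x \<in> C \<and> 0 < rA \<and> cball x rA \<subseteq> C \<and> C \<subseteq> cball x rB \<and> rB / rA \<le> \<rho>"

definition fat :: "real \<Rightarrow> complex set \<Rightarrow> bool" where
  "fat \<rho> C \<longleftrightarrow> jordan_region C \<and> (\<exists>x rA rB. fat_witness \<rho> C x rA rB)"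

definition fat_size :: "real \<Rightarrow> complex set \<Rightarrow> real" where
  "fat_size \<rho> C = Sup {rA. \<exists>x rB. fat_witness \<rho> C x rA rB}"

definition size_ratio :: "real \<Rightarrow> complex set set \<Rightarrow> real" where
  "size_ratio \<rho> F = Max {fat_size \<rho> C1 / fat_size \<rho> C2 | C1 C2. C1 \<in> F \<and> C2 \<in> F}"

definition intersection_adj :: "'a set \<Rightarrow> 'a set \<Rightarrow> bool" where
  "intersection_adj C1 C2 \<longleftrightarrow> C1 \<noteq> C2 \<and> C1 \<inter> C2 \<noteq> {}"

definition open_nbhd :: "'a set \<Rightarrow> ('a \<Rightarrow> 'a \<Rightarrow> bool) \<Rightarrow> 'a \<Rightarrow> 'a set" where
  "open_nbhd V E v = {u \<in> V. E u v}"

definition closed_nbhd :: "'a set \<Rightarrow> ('a \<Rightarrow> 'a \<Rightarrow> bool) \<Rightarrow> 'a \<Rightarrow> 'a set" where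
  "closed_nbhd V E v = insert v (open_nbhd V E v)"

definition has_unique_color :: "('a \<Rightarrow> 'c) \<Rightarrow> 'a set \<Rightarrow> bool" where
  "has_unique_color f S \<longleftrightarrow> (\<exists>u\<in>S. \<forall>w\<in>S. w \<noteq> u \<longrightarrow> f w \<noteq> f u)"

definition pointed_CF_coloring :: "'a set \<Rightarrow> ('a \<Rightarrow> 'a \<Rightarrow> bool) \<Rightarrow> ('a \<Rightarrow> 'c) \<Rightarrow> bool" where
  "pointed_CF_coloring V E f \<longleftrightarrow>
     (\<forall>v\<in>V. open_nbhd V E v \<noteq> {} \<longrightarrow> has_unique_color f (open_nbhd V E v))"

definition closed_CF_coloring :: "'a set \<Rightarrow> ('a \<Rightarrow> 'a \<Rightarrow> bool) \<Rightarrow> ('a \<Rightarrow> 'c) \<Rightarrow> bool" where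
  "closed_CF_coloring V E f \<longleftrightarrow> (\<forall>v\<in>V. has_unique_color f (closed_nbhd V E v))"

definition chi_CF_pn :: "'a set \<Rightarrow> ('a \<Rightarrow> 'a \<Rightarrow> bool) \<Rightarrow> nat" where
  "chi_CF_pn V E = (LEAST n. \<exists>f :: 'a \<Rightarrow> nat. card (f ` V) = n \<and> pointed_CF_coloring V E f)"

definition chi_CF_cn :: "'a set \<Rightarrow> ('a \<Rightarrow> 'a \<Rightarrow> bool) \<Rightarrow> nat" where
  "chi_CF_cn V E = (LEAST n. \<exists>f :: 'a \<Rightarrow> nat. card (f ` V) = n \<and> closed_CF_coloring V E f)"

end

theory Submission
  imports Defs
begin

text \<open>
  Every object C of the family contains a disc of radius \<open>a C\<close> around a centre \<open>c C\<close> and lies in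
  the concentric disc of radius \<open>\<rho> * a C\<close>, where \<open>s \<le> a C \<le> 2ks\<close> for one common scale s.
  If the side h of a square grid is at most half the inner radius, objects whose centres share a
  cell pairwise intersect; colouring the cells periodically with \<open>M\<^sup>2\<close> colours, M of order
  (outer radius)/h, separates any two cells whose centres are joined by a walk of bounded length in G.

  Pointed colouring (one grid, \<open>M = O(k\<rho>)\<close>): take a maximal independent set I. Its vertices get
  their cell colour; each of them that has a neighbour elects one, which receives the same colour
  from a second palette; all other vertices share one further colour. A vertex outside I sees its
  dominating neighbour in I with a unique colour and a vertex of I its elected neighbour, since two
  competing candidates would be joined by a walk of length at most four.

  Closed colouring: sort the objects into the \<open>O(log k)\<close> dyadic classes of \<open>a C / s\<close>, use a grid
  scaled to each class with \<open>M = O(\<rho>)\<close>, and a set that is maximal independent within each class,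
  coloured by its class and cell colour; the remaining vertices share one further colour.
\<close>

lemma has_unique_color_comp:
  assumes "has_unique_color f S" "inj_on \<phi> (f ` V)" "S \<subseteq> V"
  shows "has_unique_color (\<phi> \<circ> f) S"
  using assms by (auto simp: has_unique_color_def inj_on_def) (metis subsetD)

lemma chi_CF_pn_le_card:
  assumes "finite V" "pointed_CF_coloring V E f"
  shows "chi_CF_pn V E \<le> card (f ` V)"
proof -
  obtain \<phi> :: "_ \<Rightarrow> nat" where \<phi>: "inj_on \<phi> (f ` V)"
    using finite_imp_inj_to_nat_seg[of "f ` V"] assms(1) by blast
  have "pointed_CF_coloring V E (\<phi> \<circ> f)"
    using assms(2) by (auto simp: pointed_CF_coloring_def open_nbhd_def
        intro!: has_unique_color_comp[OF _ \<phi>])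
  moreover have "card ((\<phi> \<circ> f) ` V) = card (f ` V)"
    unfolding image_comp[symmetric] by (rule card_image[OF \<phi>])
  ultimately show ?thesis
    unfolding chi_CF_pn_def by (metis (mono_tags) Least_le)
qed

lemma chi_CF_cn_le_card:
  assumes "finite V" "closed_CF_coloring V E f"
  shows "chi_CF_cn V E \<le> card (f ` V)"
proof -
  obtain \<phi> :: "_ \<Rightarrow> nat" where \<phi>: "inj_on \<phi> (f ` V)"
    using finite_imp_inj_to_nat_seg[of "f ` V"] assms(1) by blast
  have "closed_CF_coloring V E (\<phi> \<circ> f)"
    using assms(2) by (auto simp: closed_CF_coloring_def closed_nbhd_def open_nbhd_def
        intro!: has_unique_color_comp[OF _ \<phi>])
  moreover have "card ((\<phi> \<circ> f) ` V) = card (f ` V)"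
    unfolding image_comp[symmetric] by (rule card_image[OF \<phi>])
  ultimately show ?thesis
    unfolding chi_CF_cn_def by (metis (mono_tags) Least_le)
qed

lemma ex_maximal_independent_subset:
  assumes "finite V" "symp R"
  obtains I where "I \<subseteq> V" "\<forall>u\<in>I. \<forall>w\<in>I. u \<noteq> w \<longrightarrow> \<not> R u w"
    "\<forall>v\<in>V - I. \<exists>u\<in>I. R u v"
proof -
  define indep where "indep I \<longleftrightarrow> (\<forall>u\<in>I. \<forall>w\<in>I. u \<noteq> w \<longrightarrow> \<not> R u w)" for I
  define S where "S = {I. I \<subseteq> V \<and> indep I}"
  have "finite S" using assms(1) by (simp add: S_def)
  moreover have "{} \<in> S" by (simp add: S_def indep_def)
  ultimately have "\<exists>I\<in>S. \<forall>J\<in>S. I \<subseteq> J \<longrightarrow> I = J" by (intro finite_has_maximal) auto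
  then obtain I where "I \<in> S" and max: "\<forall>J\<in>S. I \<subseteq> J \<longrightarrow> I = J" ..
  hence I: "I \<subseteq> V" "indep I" by (simp_all add: S_def)
  show ?thesis
  proof (rule that)
    show "I \<subseteq> V" "\<forall>u\<in>I. \<forall>w\<in>I. u \<noteq> w \<longrightarrow> \<not> R u w"
      using I by (simp_all add: indep_def)
    show "\<forall>v\<in>V - I. \<exists>u\<in>I. R u v"
    proof
      fix v assume v: "v \<in> V - I"
      hence "insert v I \<notin> S" using max by blast
      hence "\<not> indep (insert v I)" using I v by (simp add: S_def)
      then obtain u w where uw: "u \<in> insert v I" "w \<in> insert v I" "u \<noteq> w" "R u w"
        by (auto simp: indep_def)
      show "\<exists>u\<in>I. R u v"
      proof (cases "w = v")
        case True
        thus ?thesis using uw I(2) by (auto simp: indep_def)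
      next
        case False
        hence "u = v" "w \<in> I" using uw I(2) by (auto simp: indep_def)
        thus ?thesis using uw(4) sympD[OF assms(2)] by blast
      qed
    qed
  qed
qed

locale pointed_CF_construction =
  fixes V :: "'a set" and E :: "'a \<Rightarrow> 'a \<Rightarrow> bool" and I :: "'a set" and col :: "'a \<Rightarrow> 'c"
  assumes sym: "symp E" and I_subset: "I \<subseteq> V"
    and independent: "\<And>u w. u \<in> I \<Longrightarrow> w \<in> I \<Longrightarrow> \<not> E u w"
    and dominating: "\<And>v. v \<in> V \<Longrightarrow> v \<notin> I \<Longrightarrow> \<exists>u\<in>I. E u v"
    and apart: "\<And>u a b c w. u \<in> I \<Longrightarrow> w \<in> I \<Longrightarrow> u \<noteq> w \<Longrightarrow> a \<in> V \<Longrightarrow> b \<in> V \<Longrightarrow> c \<in> V \<Longrightarrow>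
        E u a \<Longrightarrow> E a b \<Longrightarrow> E b c \<Longrightarrow> E c w \<Longrightarrow> col u \<noteq> col w"
begin

lemma E_sym: "E u w \<Longrightarrow> E w u"
  using sym by (rule sympD)

definition owners :: "'a set" where
  "owners = {v \<in> I. open_nbhd V E v \<noteq> {}}"

definition rep :: "'a \<Rightarrow> 'a" where
  "rep v = (SOME w. w \<in> open_nbhd V E v)"

definition owner :: "'a \<Rightarrow> 'a" where
  "owner = inv_into owners rep"

definition colour :: "'a \<Rightarrow> (bool \<times> 'c) option" where
  "colour v = (if v \<in> I then Some (False, col v)
     else if v \<in> rep ` owners then Some (True, col (owner v)) else None)"

lemma rep_neighbour:
  assumes "v \<in> owners"
  shows "rep v \<in> V" "E (rep v) v"
proof -
  have "rep v \<in> open_nbhd V E v" using assms unfolding owners_def rep_def by (auto intro: someI_ex)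
  thus "rep v \<in> V" "E (rep v) v" by (simp_all add: open_nbhd_def)
qed

lemma owner_rep:
  assumes "w \<in> rep ` owners"
  shows "owner w \<in> owners" "rep (owner w) = w" "owner w \<in> I"
proof -
  show "owner w \<in> owners" "rep (owner w) = w"
    using assms unfolding owner_def by (simp_all add: inv_into_into f_inv_into_f)
  thus "owner w \<in> I" by (simp add: owners_def)
qed

lemma rep_notin_I:
  assumes "w \<in> rep ` owners"
  shows "w \<notin> I"
  using independent[of w "owner w"] rep_neighbour(2)[OF owner_rep(1)] owner_rep assms by auto

lemma unique_colour_outside_I:
  assumes v: "v \<in> V" "v \<notin> I"
  shows "has_unique_color colour (open_nbhd V E v)"
proof -
  obtain u where u: "u \<in> I" "E u v" using dominating[OF v] by blast
  have "colour w \<noteq> colour u" if w: "w \<in> open_nbhd V E v" "w \<noteq> u" for w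
  proof
    assume "colour w = colour u"
    hence "w \<in> I" "col w = col u" using u by (auto simp: colour_def split: if_splits)
    moreover have "E v w" using w E_sym by (simp add: open_nbhd_def)
    \<comment> \<open>a common neighbour gives the backtracking walk \<open>u v u v w\<close> of length four\<close>
    ultimately show False
      using apart[of u w v u v] u E_sym[OF u(2)] w v I_subset by (auto simp: open_nbhd_def)
  qed
  moreover have "u \<in> open_nbhd V E v" using u I_subset by (auto simp: open_nbhd_def)
  ultimately show ?thesis by (auto simp: has_unique_color_def)
qed

lemma unique_colour_in_I:
  assumes v: "v \<in> I" "open_nbhd V E v \<noteq> {}"
  shows "has_unique_color colour (open_nbhd V E v)"
proof -
  have vJ: "v \<in> owners" using v by (simp add: owners_def)
  define w0 where "w0 = rep v"
  have w0: "w0 \<in> rep ` owners" "w0 \<in> open_nbhd V E v"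
    using vJ rep_neighbour[OF vJ] by (auto simp: w0_def open_nbhd_def)
  have "colour w \<noteq> colour w0" if w: "w \<in> open_nbhd V E v" "w \<noteq> w0" for w
  proof
    assume eq: "colour w = colour w0"
    have wV: "w \<in> V" and Ewv: "E w v" using w by (auto simp: open_nbhd_def)
    hence "w \<notin> I" using independent v(1) by blast
    hence wW: "w \<in> rep ` owners" and same_col: "col (owner w0) = col (owner w)"
      using eq rep_notin_I[OF w0(1)] w0(1) by (simp_all add: colour_def split: if_split_asm)
    have "owner w0 \<noteq> owner w" using owner_rep(2)[OF w0(1)] owner_rep(2)[OF wW] w(2) by metis
    moreover have "E (owner w0) w0" "E w (owner w)"
      using rep_neighbour(2)[OF owner_rep(1)] owner_rep(2) w0(1) wW E_sym by metis+
    moreover have "w0 \<in> V" "E w0 v" using rep_neighbour[OF vJ] by (simp_all add: w0_def)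
    ultimately show False
      using apart[OF owner_rep(3)[OF w0(1)] owner_rep(3)[OF wW] _ _ _ wV _ _ E_sym[OF Ewv]] same_col
        I_subset v(1) by auto
  qed
  thus ?thesis using w0(2) by (auto simp: has_unique_color_def)
qed

lemma pointed_CF_coloring_colour: "pointed_CF_coloring V E colour"
  using unique_colour_outside_I unique_colour_in_I I_subset
  by (auto simp: pointed_CF_coloring_def)

lemma colour_range: "colour ` V \<subseteq> insert None (Some ` (UNIV \<times> col ` V))"
proof -
  have "col (owner v) \<in> col ` V" if "v \<in> rep ` owners" for v
    using owner_rep(3)[OF that] I_subset by blast
  thus ?thesis by (auto simp: colour_def)
qed

end

lemma chi_CF_pn_clique_partition_bound:
  fixes E :: "'a \<Rightarrow> 'a \<Rightarrow> bool" and g :: "'a \<Rightarrow> 'b" and col :: "'a \<Rightarrow> 'c"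
  assumes fin: "finite V" and sym: "symp E" and irr: "irreflp E"
    and clique: "\<And>u w. u \<in> V \<Longrightarrow> w \<in> V \<Longrightarrow> u \<noteq> w \<Longrightarrow> g u = g w \<Longrightarrow> E u w"
    and separated: "\<And>u a b c w. u \<in> V \<Longrightarrow> a \<in> V \<Longrightarrow> b \<in> V \<Longrightarrow> c \<in> V \<Longrightarrow> w \<in> V \<Longrightarrow>
        E u a \<Longrightarrow> E a b \<Longrightarrow> E b c \<Longrightarrow> E c w \<Longrightarrow> col u = col w \<Longrightarrow> g u = g w"
  shows "chi_CF_pn V E \<le> 2 * card (col ` V) + 1"
proof -
  obtain I where IV: "I \<subseteq> V" and indep: "\<forall>u\<in>I. \<forall>w\<in>I. u \<noteq> w \<longrightarrow> \<not> E u w"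
    and dom: "\<forall>v\<in>V - I. \<exists>u\<in>I. E u v"
    by (rule ex_maximal_independent_subset[OF fin sym])
  interpret pointed_CF_construction V E I col
  proof
    show "\<not> E u w" if "u \<in> I" "w \<in> I" for u w
      using indep irr that by (cases "u = w") (auto dest: irreflpD)
    show "col u \<noteq> col w"
      if "u \<in> I" "w \<in> I" "u \<noteq> w" "a \<in> V" "b \<in> V" "c \<in> V" "E u a" "E a b" "E b c" "E c w" for u a b c w
    proof
      assume "col u = col w"
      with that IV have "g u = g w" by (intro separated[of u a b c w]) auto
      thus False using clique[of u w] indep that IV by auto
    qed
  qed (use sym IV dom in auto)
  have "chi_CF_pn V E \<le> card (colour ` V)"
    by (rule chi_CF_pn_le_card[OF fin pointed_CF_coloring_colour])
  also have "\<dots> \<le> card (insert None (Some ` ((UNIV :: bool set) \<times> col ` V)))"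
    using colour_range fin by (intro card_mono) simp_all
  also have "\<dots> = 2 * card (col ` V) + 1"
    using fin by (simp add: card_image card_cartesian_product)
  finally show ?thesis .
qed

lemma closed_CF_coloring_levelled_independent_set:
  fixes \<kappa> :: "'a \<Rightarrow> 'l" and col :: "'a \<Rightarrow> 'c"
  assumes sym: "symp E" and IV: "I \<subseteq> V"
    and independent: "\<And>u w. u \<in> I \<Longrightarrow> w \<in> I \<Longrightarrow> u \<noteq> w \<Longrightarrow> \<kappa> u = \<kappa> w \<Longrightarrow> \<not> E u w"
    and dominating: "\<And>v. v \<in> V \<Longrightarrow> v \<notin> I \<Longrightarrow> \<exists>u\<in>I. \<kappa> u = \<kappa> v \<and> E u v"
    and apart: "\<And>v u w. v \<in> V \<Longrightarrow> u \<in> I \<Longrightarrow> w \<in> I \<Longrightarrow> u \<noteq> w \<Longrightarrow> \<kappa> u = \<kappa> v \<Longrightarrow> \<kappa> w = \<kappa> v \<Longrightarrow>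
        E v u \<Longrightarrow> E v w \<Longrightarrow> col u \<noteq> col w"
  shows "closed_CF_coloring V E (\<lambda>v. if v \<in> I then Some (\<kappa> v, col v) else None)"
    (is "closed_CF_coloring V E ?f")
proof -
  have E_sym: "E w u" if "E u w" for u w
    using sym that by (rule sympD)
  have "has_unique_color ?f (closed_nbhd V E v)" if v: "v \<in> V" for v
  proof (cases "v \<in> I")
    case True
    have "?f w \<noteq> ?f v" if w: "w \<in> closed_nbhd V E v" "w \<noteq> v" for w
    proof
      assume "?f w = ?f v"
      hence "w \<in> I" "\<kappa> w = \<kappa> v" using True by (simp_all split: if_split_asm)
      moreover have "E w v" using w by (simp add: closed_nbhd_def open_nbhd_def)
      ultimately show False using independent True w(2) by blast
    qed
    thus ?thesis by (auto simp: has_unique_color_def closed_nbhd_def)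
  next
    case False
    then obtain u where u: "u \<in> I" "\<kappa> u = \<kappa> v" "E u v" using dominating v by blast
    have "?f w \<noteq> ?f u" if w: "w \<in> closed_nbhd V E v" "w \<noteq> u" for w
    proof
      assume "?f w = ?f u"
      hence "w \<in> I" "\<kappa> w = \<kappa> v" "col w = col u" using u(1,2) by (simp_all split: if_split_asm)
      moreover have "E v w" using w False \<open>w \<in> I\<close> E_sym by (auto simp: closed_nbhd_def open_nbhd_def)
      ultimately show False using apart[OF v u(1) _ w(2)[symmetric] u(2)] E_sym[OF u(3)] by auto
    qed
    moreover have "u \<in> closed_nbhd V E v" using u IV by (auto simp: closed_nbhd_def open_nbhd_def)
    ultimately show ?thesis unfolding has_unique_color_def by blast
  qed
  thus ?thesis by (simp add: closed_CF_coloring_def)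
qed

lemma chi_CF_cn_levelled_clique_partition_bound:
  fixes E :: "'a \<Rightarrow> 'a \<Rightarrow> bool" and \<kappa> :: "'a \<Rightarrow> 'l" and g :: "'a \<Rightarrow> 'b" and col :: "'a \<Rightarrow> 'c"
  assumes fin: "finite V" and sym: "symp E"
    and clique: "\<And>u w. u \<in> V \<Longrightarrow> w \<in> V \<Longrightarrow> u \<noteq> w \<Longrightarrow> \<kappa> u = \<kappa> w \<Longrightarrow> g u = g w \<Longrightarrow> E u w"
    and separated: "\<And>v u w. v \<in> V \<Longrightarrow> u \<in> V \<Longrightarrow> w \<in> V \<Longrightarrow> \<kappa> u = \<kappa> v \<Longrightarrow> \<kappa> w = \<kappa> v \<Longrightarrow>
        E v u \<Longrightarrow> E v w \<Longrightarrow> col u = col w \<Longrightarrow> g u = g w"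
  shows "chi_CF_cn V E \<le> card (\<kappa> ` V) * card (col ` V) + 1"
proof -
  define R where "R u w \<longleftrightarrow> \<kappa> u = \<kappa> w \<and> E u w" for u w
  have "symp R" using sym unfolding R_def symp_def by metis
  then obtain I where IV: "I \<subseteq> V" and indep: "\<forall>u\<in>I. \<forall>w\<in>I. u \<noteq> w \<longrightarrow> \<not> R u w"
    and dom: "\<forall>v\<in>V - I. \<exists>u\<in>I. R u v"
    by (rule ex_maximal_independent_subset[OF fin])
  define f where "f v = (if v \<in> I then Some (\<kappa> v, col v) else None)" for v
  have "closed_CF_coloring V E f"
    unfolding f_def
  proof (rule closed_CF_coloring_levelled_independent_set[OF sym IV])
    show "col u \<noteq> col w"
      if "v \<in> V" "u \<in> I" "w \<in> I" "u \<noteq> w" "\<kappa> u = \<kappa> v" "\<kappa> w = \<kappa> v" "E v u" "E v w" for v u w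
    proof
      assume "col u = col w"
      with that IV have "g u = g w" by (intro separated[of v u w]) auto
      thus False using clique[of u w] indep that IV by (auto simp: R_def)
    qed
  qed (use indep dom in \<open>auto simp: R_def\<close>)
  hence "chi_CF_cn V E \<le> card (f ` V)" by (rule chi_CF_cn_le_card[OF fin])
  also have "\<dots> \<le> card (insert None (Some ` (\<kappa> ` V \<times> col ` V)))"
    using fin IV by (intro card_mono) (auto simp: f_def)
  also have "\<dots> = card (\<kappa> ` V) * card (col ` V) + 1"
    using fin by (simp add: card_image card_cartesian_product)
  finally show ?thesis .
qed

definition grid_cell :: "real \<Rightarrow> complex \<Rightarrow> int \<times> int" where
  "grid_cell h z = (\<lfloor>Re z / h\<rfloor>, \<lfloor>Im z / h\<rfloor>)"

definition grid_colour :: "nat \<Rightarrow> real \<Rightarrow> complex \<Rightarrow> int \<times> int" where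
  "grid_colour M h z = map_prod (\<lambda>i. i mod int M) (\<lambda>i. i mod int M) (grid_cell h z)"

lemma card_grid_colours:
  assumes "M > 0"
  shows "card ((\<lambda>x. grid_colour M (h x) (z x)) ` A) \<le> M\<^sup>2"
proof -
  have "(\<lambda>x. grid_colour M (h x) (z x)) ` A \<subseteq> {0..<int M} \<times> {0..<int M}"
    using assms by (auto simp: grid_colour_def grid_cell_def)
  hence "card ((\<lambda>x. grid_colour M (h x) (z x)) ` A) \<le> card ({0..<int M} \<times> {0..<int M})"
    by (intro card_mono) auto
  thus ?thesis by (simp add: card_cartesian_product power2_eq_square)
qed

lemma abs_diff_lt_if_same_floor_divide:
  fixes x y h :: real
  assumes h: "h > 0" and eq: "\<lfloor>x / h\<rfloor> = \<lfloor>y / h\<rfloor>"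
  shows "\<bar>x - y\<bar> < h"
proof -
  have "\<bar>x / h - y / h\<bar> < 1"
    using of_int_floor_le[of "x / h"] real_of_int_floor_add_one_gt[of "x / h"]
      of_int_floor_le[of "y / h"] real_of_int_floor_add_one_gt[of "y / h"] eq
    unfolding abs_less_iff by linarith
  thus ?thesis using h by (simp add: diff_divide_distrib[symmetric] divide_less_eq)
qed

lemma dist_lt_if_same_grid_cell:
  assumes h: "h > 0" and cell: "grid_cell h p = grid_cell h q"
  shows "dist p q < 2 * h"
proof -
  have "\<bar>Re p - Re q\<bar> < h" "\<bar>Im p - Im q\<bar> < h"
    using cell abs_diff_lt_if_same_floor_divide[OF h] by (simp_all add: grid_cell_def)
  moreover have "dist p q \<le> \<bar>Re (p - q)\<bar> + \<bar>Im (p - q)\<bar>"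
    using cmod_le[of "p - q"] by (simp add: dist_norm)
  ultimately show ?thesis by simp
qed

lemma floor_divide_eq_if_mod_eq:
  fixes t u h R :: real and M :: nat
  assumes h: "h > 0" and tu: "\<bar>t - u\<bar> \<le> R" and M: "R + h \<le> real M * h"
    and congr: "\<lfloor>t / h\<rfloor> mod int M = \<lfloor>u / h\<rfloor> mod int M"
  shows "\<lfloor>t / h\<rfloor> = \<lfloor>u / h\<rfloor>"
proof (rule ccontr)
  assume ne: "\<lfloor>t / h\<rfloor> \<noteq> \<lfloor>u / h\<rfloor>"
  have "\<bar>t / h - u / h\<bar> \<le> R / h"
    using tu h by (simp add: diff_divide_distrib[symmetric] divide_right_mono)
  hence "\<bar>real_of_int (\<lfloor>t / h\<rfloor> - \<lfloor>u / h\<rfloor>)\<bar> < R / h + 1"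
    using of_int_floor_le[of "t / h"] real_of_int_floor_add_one_gt[of "t / h"]
      of_int_floor_le[of "u / h"] real_of_int_floor_add_one_gt[of "u / h"]
    unfolding abs_le_iff abs_less_iff of_int_diff by linarith
  also have "R / h + 1 \<le> real M" using M h by (simp add: field_simps)
  finally have "\<bar>\<lfloor>t / h\<rfloor> - \<lfloor>u / h\<rfloor>\<bar> < int M" by linarith
  moreover have "int M dvd \<lfloor>t / h\<rfloor> - \<lfloor>u / h\<rfloor>" using congr by (simp add: mod_eq_dvd_iff)
  hence "\<bar>int M\<bar> \<le> \<bar>\<lfloor>t / h\<rfloor> - \<lfloor>u / h\<rfloor>\<bar>" using ne by (intro dvd_imp_le_int) auto
  ultimately show False by simp
qed

lemma same_grid_cell_if_same_colour:
  assumes h: "h > 0" and pq: "dist p q \<le> R" and M: "R + h \<le> real M * h"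
    and colour: "grid_colour M h p = grid_colour M h q"
  shows "grid_cell h p = grid_cell h q"
proof -
  have "\<bar>Re p - Re q\<bar> \<le> R" "\<bar>Im p - Im q\<bar> \<le> R"
    using pq abs_Re_le_cmod[of "p - q"] abs_Im_le_cmod[of "p - q"] by (simp_all add: dist_norm)
  moreover have "\<lfloor>Re p / h\<rfloor> mod int M = \<lfloor>Re q / h\<rfloor> mod int M"
    "\<lfloor>Im p / h\<rfloor> mod int M = \<lfloor>Im q / h\<rfloor> mod int M"
    using colour by (simp_all add: grid_colour_def grid_cell_def)
  ultimately show ?thesis
    using floor_divide_eq_if_mod_eq[OF h _ M] by (simp add: grid_cell_def)
qed

lemma dist_le_if_intersection_adj:
  assumes "intersection_adj C D" "C \<subseteq> cball p r" "D \<subseteq> cball q t"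
  shows "dist p q \<le> r + t"
proof -
  obtain z where "z \<in> C" "z \<in> D" using assms(1) by (auto simp: intersection_adj_def)
  hence "dist p z \<le> r" "dist q z \<le> t" using assms by auto
  thus ?thesis using dist_triangle[of p q z] by (simp add: dist_commute)
qed

lemma intersection_adj_if_same_grid_cell:
  assumes "C \<noteq> D" "h > 0" "cball (c C) (2 * h) \<subseteq> C" "cball (c D) (2 * h) \<subseteq> D"
    and "grid_cell h (c C) = grid_cell h (c D)"
  shows "intersection_adj C D"
proof -
  have "c D \<in> C" using dist_lt_if_same_grid_cell[OF assms(2,5)] assms(3) by auto
  moreover have "c D \<in> D" using assms(2,4) by auto
  ultimately show ?thesis using assms(1) by (auto simp: intersection_adj_def)
qed

lemma symp_intersection_adj: "symp intersection_adj"
  by (auto simp: symp_def intersection_adj_def)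

lemma irreflp_intersection_adj: "irreflp intersection_adj"
  by (simp add: irreflp_def intersection_adj_def)

lemma chi_CF_pn_uniform_discs:
  fixes F :: "complex set set" and c :: "complex set \<Rightarrow> complex"
  assumes fin: "finite F" and h: "h > 0" and R: "0 \<le> R" "8 * R + 1 \<le> real M"
    and discs: "\<And>C. C \<in> F \<Longrightarrow> cball (c C) (2 * h) \<subseteq> C \<and> C \<subseteq> cball (c C) (R * h)"
  shows "chi_CF_pn F intersection_adj \<le> 2 * M\<^sup>2 + 1"
proof -
  have M: "M > 0" using R by simp
  have edge: "dist (c C) (c D) \<le> 2 * R * h" if "C \<in> F" "D \<in> F" "intersection_adj C D" for C D
  proof -
    have "dist (c C) (c D) \<le> R * h + R * h"
      using discs[OF that(1)] discs[OF that(2)] by (intro dist_le_if_intersection_adj[OF that(3)]) auto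
    thus ?thesis by simp
  qed
  have "chi_CF_pn F intersection_adj \<le> 2 * card ((\<lambda>C. grid_colour M h (c C)) ` F) + 1"
  proof (rule chi_CF_pn_clique_partition_bound[where g = "\<lambda>C. grid_cell h (c C)"])
    show "intersection_adj u w" if "u \<in> F" "w \<in> F" "u \<noteq> w"
      and "grid_cell h (c u) = grid_cell h (c w)" for u w
      using intersection_adj_if_same_grid_cell[OF that(3) h] discs that by blast
    show "grid_cell h (c u) = grid_cell h (c w)"
      if "u \<in> F" "a \<in> F" "b \<in> F" "c' \<in> F" "w \<in> F" "intersection_adj u a" "intersection_adj a b"
        "intersection_adj b c'" "intersection_adj c' w" "grid_colour M h (c u) = grid_colour M h (c w)"
      for u a b c' w
    proof (rule same_grid_cell_if_same_colour[OF h _ _ that(10)])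
      have "dist (c u) (c w) \<le> dist (c u) (c a) + dist (c a) (c b) + dist (c b) (c c') + dist (c c') (c w)"
        using dist_triangle[of "c u" "c w" "c a"] dist_triangle[of "c a" "c w" "c b"]
          dist_triangle[of "c b" "c w" "c c'"] by linarith
      also have "\<dots> \<le> 8 * R * h"
        using edge[OF that(1,2,6)] edge[OF that(2,3,7)] edge[OF that(3,4,8)] edge[OF that(4,5,9)] by linarith
      finally show "dist (c u) (c w) \<le> 8 * R * h" .
      show "8 * R * h + h \<le> real M * h"
        using mult_right_mono[OF R(2), of h] h by (simp add: algebra_simps)
    qed
  qed (use fin symp_intersection_adj irreflp_intersection_adj in auto)
  also have "card ((\<lambda>C. grid_colour M h (c C)) ` F) \<le> M\<^sup>2"
    using card_grid_colours[OF M, of "\<lambda>_. h" c F] by simp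
  finally show ?thesis by simp
qed

lemma chi_CF_cn_levelled_discs:
  fixes F :: "complex set set" and c :: "complex set \<Rightarrow> complex" and \<kappa> :: "complex set \<Rightarrow> nat"
  assumes fin: "finite F" and h: "\<And>j. h j > 0" and R: "0 \<le> R" "4 * R + 1 \<le> real M"
    and levels: "\<And>C. C \<in> F \<Longrightarrow> \<kappa> C \<le> L"
    and discs: "\<And>C. C \<in> F \<Longrightarrow> cball (c C) (2 * h (\<kappa> C)) \<subseteq> C \<and> C \<subseteq> cball (c C) (R * h (\<kappa> C))"
  shows "chi_CF_cn F intersection_adj \<le> (L + 1) * M\<^sup>2 + 1"
proof -
  have M: "M > 0" using R by simp
  define col where "col C = grid_colour M (h (\<kappa> C)) (c C)" for C
  have edge: "dist (c C) (c D) \<le> 2 * R * h (\<kappa> C)"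
    if "C \<in> F" "D \<in> F" "\<kappa> D = \<kappa> C" "intersection_adj C D" for C D
  proof -
    have "dist (c C) (c D) \<le> R * h (\<kappa> C) + R * h (\<kappa> C)"
      using discs[OF that(1)] discs[OF that(2)] that(3)
      by (intro dist_le_if_intersection_adj[OF that(4)]) auto
    thus ?thesis by simp
  qed
  have "chi_CF_cn F intersection_adj \<le> card (\<kappa> ` F) * card (col ` F) + 1"
  proof (rule chi_CF_cn_levelled_clique_partition_bound[where g = "\<lambda>C. grid_cell (h (\<kappa> C)) (c C)"])
    show "intersection_adj u w" if "u \<in> F" "w \<in> F" "u \<noteq> w" "\<kappa> u = \<kappa> w"
      and "grid_cell (h (\<kappa> u)) (c u) = grid_cell (h (\<kappa> w)) (c w)" for u w
      using intersection_adj_if_same_grid_cell[OF that(3) h[of "\<kappa> u"], where c = c]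
        discs[OF that(1)] discs[OF that(2)] that(4,5) by simp
    show "grid_cell (h (\<kappa> u)) (c u) = grid_cell (h (\<kappa> w)) (c w)"
      if "v \<in> F" "u \<in> F" "w \<in> F" "\<kappa> u = \<kappa> v" "\<kappa> w = \<kappa> v" "intersection_adj v u"
        "intersection_adj v w" "col u = col w" for v u w
    proof -
      have "dist (c u) (c w) \<le> dist (c v) (c u) + dist (c v) (c w)"
        by (rule dist_triangle3)
      also have "\<dots> \<le> 4 * R * h (\<kappa> v)"
        using edge[OF that(1,2,4,6)] edge[OF that(1,3,5,7)] by linarith
      finally have "dist (c u) (c w) \<le> 4 * R * h (\<kappa> v)" .
      moreover have "4 * R * h (\<kappa> v) + h (\<kappa> v) \<le> real M * h (\<kappa> v)"
        using mult_right_mono[OF R(2), of "h (\<kappa> v)"] h[of "\<kappa> v"] by (simp add: algebra_simps)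
      ultimately show ?thesis
        using same_grid_cell_if_same_colour[OF h] that(4,5,8) by (simp add: col_def)
    qed
  qed (use fin symp_intersection_adj in auto)
  also have "card (\<kappa> ` F) * card (col ` F) \<le> (L + 1) * M\<^sup>2"
  proof (rule mult_le_mono)
    show "card (\<kappa> ` F) \<le> L + 1"
      using card_mono[of "{..L}" "\<kappa> ` F"] levels by auto
    show "card (col ` F) \<le> M\<^sup>2"
      using card_grid_colours[OF M, of "\<lambda>C. h (\<kappa> C)" c F] by (simp add: col_def)
  qed
  finally show ?thesis by simp
qed

lemma fat_witness_inner_le_outer:
  assumes "fat_witness \<rho> C x a b" "fat_witness \<rho> C x' a' b'"
  shows "a' \<le> b"
proof -
  have "cball x' a' \<subseteq> cball x b" "a' > 0"
    using assms by (auto simp: fat_witness_def)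
  hence "dist x' x + a' \<le> b" by (simp add: cball_subset_cball_iff)
  thus ?thesis using zero_le_dist[of x' x] by linarith
qed

lemma fat_witness_le_fat_size:
  assumes "fat_witness \<rho> C x a b"
  shows "a \<le> fat_size \<rho> C"
  unfolding fat_size_def
proof (rule cSup_upper)
  show "a \<in> {rA. \<exists>x rB. fat_witness \<rho> C x rA rB}" using assms by blast
  show "bdd_above {rA. \<exists>x rB. fat_witness \<rho> C x rA rB}"
    using fat_witness_inner_le_outer[OF assms] by (auto simp: bdd_above_def)
qed

lemma ex_fat_witness_gt_half_size:
  assumes "fat \<rho> C"
  obtains x a b where "fat_witness \<rho> C x a b" "fat_size \<rho> C < 2 * a"
proof -
  obtain x0 a0 b0 where w0: "fat_witness \<rho> C x0 a0 b0" using assms by (auto simp: fat_def)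
  have "0 < a0" using w0 by (simp add: fat_witness_def)
  also have "a0 \<le> fat_size \<rho> C" by (rule fat_witness_le_fat_size[OF w0])
  finally have "fat_size \<rho> C / 2 < Sup {rA. \<exists>x rB. fat_witness \<rho> C x rA rB}"
    by (simp add: fat_size_def)
  moreover have "{rA. \<exists>x rB. fat_witness \<rho> C x rA rB} \<noteq> {}" using w0 by blast
  ultimately obtain a where "a \<in> {rA. \<exists>x rB. fat_witness \<rho> C x rA rB}" and gt: "fat_size \<rho> C / 2 < a"
    by (rule less_cSupE)
  then obtain x b where "fat_witness \<rho> C x a b" by blast
  thus ?thesis by (rule that) (use gt in linarith)
qed

lemma fat_size_ratio_le_size_ratio:
  assumes "finite F" "C \<in> F" "D \<in> F"
  shows "fat_size \<rho> C / fat_size \<rho> D \<le> size_ratio \<rho> F"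
proof -
  have "{fat_size \<rho> C1 / fat_size \<rho> C2 | C1 C2. C1 \<in> F \<and> C2 \<in> F}
      = (\<lambda>(C1, C2). fat_size \<rho> C1 / fat_size \<rho> C2) ` (F \<times> F)"
    by auto
  thus ?thesis using assms unfolding size_ratio_def by (intro Max_ge) auto
qed

lemma fat_witness_subset_cball:
  assumes "fat_witness \<rho> C x a b"
  shows "C \<subseteq> cball x (\<rho> * a)"
proof -
  have "a > 0" "b / a \<le> \<rho>" using assms by (simp_all add: fat_witness_def)
  hence "b \<le> \<rho> * a" by (simp add: divide_le_eq mult.commute)
  thus ?thesis using assms by (auto simp: fat_witness_def)
qed

lemma ex_fat_witnesses:
  assumes "\<forall>C\<in>F. fat \<rho> C"
  obtains c a b where "\<forall>C\<in>F. fat_witness \<rho> C (c C) (a C) (b C) \<and> fat_size \<rho> C < 2 * a C"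
proof -
  have "\<exists>p. fat_witness \<rho> C (fst p) (fst (snd p)) (snd (snd p)) \<and> fat_size \<rho> C < 2 * fst (snd p)"
    if C: "C \<in> F" for C
  proof -
    obtain x a b where "fat_witness \<rho> C x a b" "fat_size \<rho> C < 2 * a"
      by (rule ex_fat_witness_gt_half_size[OF assms[rule_format, OF C]])
    thus ?thesis by (intro exI[of _ "(x, a, b)"]) simp
  qed
  hence "\<forall>C\<in>F. \<exists>p. fat_witness \<rho> C (fst p) (fst (snd p)) (snd (snd p)) \<and> fat_size \<rho> C < 2 * fst (snd p)" ..
  then obtain w where "\<forall>C\<in>F. fat_witness \<rho> C (fst (w C)) (fst (snd (w C))) (snd (snd (w C)))
      \<and> fat_size \<rho> C < 2 * fst (snd (w C))"
    by (rule bchoice[THEN exE])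
  thus ?thesis by (rule that)
qed

lemma fat_family_discs:
  assumes fin: "finite F" and ne: "F \<noteq> {}" and fat: "\<forall>C\<in>F. fat \<rho> C"
    and ratio: "size_ratio \<rho> F \<le> k"
  obtains s c a where "s > 0"
    "\<forall>C\<in>F. cball (c C) (a C) \<subseteq> C \<and> C \<subseteq> cball (c C) (\<rho> * a C) \<and> s \<le> a C \<and> a C \<le> 2 * k * s"
proof -
  obtain c a b where wit: "\<forall>C\<in>F. fat_witness \<rho> C (c C) (a C) (b C) \<and> fat_size \<rho> C < 2 * a C"
    by (rule ex_fat_witnesses[OF fat])
  define t where "t = Min (fat_size \<rho> ` F)"
  have "t \<in> fat_size \<rho> ` F" using fin ne by (simp add: t_def)
  then obtain C0 where C0: "C0 \<in> F" "t = fat_size \<rho> C0" by blast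
  have w0: "fat_witness \<rho> C0 (c C0) (a C0) (b C0)" using wit C0(1) by blast
  hence "0 < a C0" by (simp add: fat_witness_def)
  also have "a C0 \<le> t" using fat_witness_le_fat_size[OF w0] C0(2) by simp
  finally have "t > 0" .
  have discs: "cball (c C) (a C) \<subseteq> C \<and> C \<subseteq> cball (c C) (\<rho> * a C) \<and> t / 2 \<le> a C \<and> a C \<le> 2 * k * (t / 2)"
    if C: "C \<in> F" for C
  proof -
    have wC: "fat_witness \<rho> C (c C) (a C) (b C)" and half: "fat_size \<rho> C < 2 * a C"
      using wit C by blast+
    have "t \<le> fat_size \<rho> C" using fin C by (simp add: t_def)
    moreover have "fat_size \<rho> C / t \<le> k"
      using fat_size_ratio_le_size_ratio[OF fin C C0(1), where \<rho> = \<rho>] ratio C0(2) by simp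
    hence "fat_size \<rho> C \<le> k * t" using \<open>t > 0\<close> by (simp add: divide_le_eq)
    moreover have "a C \<le> fat_size \<rho> C" by (rule fat_witness_le_fat_size[OF wC])
    ultimately have "t / 2 \<le> a C" "a C \<le> 2 * k * (t / 2)" using half by simp_all
    moreover have "cball (c C) (a C) \<subseteq> C" using wC by (simp add: fat_witness_def)
    ultimately show ?thesis using fat_witness_subset_cball[OF wC] by blast
  qed
  show ?thesis by (rule that[of "t / 2" c a]) (use \<open>t > 0\<close> discs in auto)
qed

lemma pointed_palette_bound:
  fixes x :: real and M :: nat
  assumes x: "x \<ge> 1" and M: "real M \<le> 32 * x + 2"
  shows "real (2 * M\<^sup>2 + 1) \<le> 2313 * x\<^sup>2"
proof -
  have "(real M)\<^sup>2 \<le> (34 * x)\<^sup>2" using x M by (intro power_mono) simp_all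
  moreover have "1 \<le> x\<^sup>2" using x by (simp add: one_le_power)
  ultimately show ?thesis by (simp add: power_mult_distrib)
qed

lemma closed_palette_bound:
  fixes \<rho> k :: real and L M :: nat
  assumes \<rho>: "\<rho> \<ge> 1" and k: "k \<ge> 2" and L: "real L \<le> log 2 (2 * k)" and M: "real M \<le> 16 * \<rho> + 2"
  shows "real ((L + 1) * M\<^sup>2 + 1) \<le> 1460 * \<rho>\<^sup>2 * ln k"
proof -
  have log_k: "1 \<le> log 2 k" using k by simp
  have "real L \<le> 1 + log 2 k" using L k by (simp add: log_mult)
  hence "real L + 1 \<le> 3 * log 2 k" using log_k by linarith
  moreover have "(real M)\<^sup>2 \<le> (18 * \<rho>)\<^sup>2" using M \<rho> by (intro power_mono) simp_all
  ultimately have "(real L + 1) * (real M)\<^sup>2 \<le> (3 * log 2 k) * (18 * \<rho>)\<^sup>2"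
    by (intro mult_mono) simp_all
  moreover have "1 \<le> \<rho>\<^sup>2 * log 2 k"
    using mult_mono[OF one_le_power[OF \<rho>, of 2] log_k] by simp
  ultimately have "real ((L + 1) * M\<^sup>2 + 1) \<le> (3 * log 2 k) * (18 * \<rho>)\<^sup>2 + \<rho>\<^sup>2 * log 2 k"
    by (simp add: algebra_simps)
  also have "\<dots> = 973 * \<rho>\<^sup>2 * (ln k / ln 2)"
    by (simp add: power_mult_distrib log_def)
  also have "\<dots> \<le> 973 * \<rho>\<^sup>2 * (3 / 2 * ln k)"
  proof -
    have "ln k / ln 2 \<le> 3 / 2 * ln k"
      using ln2_ge_two_thirds k by (simp add: divide_le_eq mult_left_mono[of "2 / 3" "ln 2" "ln k"])
    thus ?thesis using \<rho> by (intro mult_left_mono) simp_all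
  qed
  also have "\<dots> \<le> 1460 * \<rho>\<^sup>2 * ln k" using k by simp
  finally show ?thesis .
qed

lemma chi_CF_pn_fat_family:
  assumes \<rho>: "\<rho> \<ge> 1" and k: "k \<ge> 1" and fin: "finite F" and fat: "\<forall>C\<in>F. fat \<rho> C"
    and ratio: "size_ratio \<rho> F \<le> k"
  shows "real (chi_CF_pn F intersection_adj) \<le> 2313 * k\<^sup>2 * \<rho>\<^sup>2"
proof (cases "F = {}")
  case True
  hence "chi_CF_pn F intersection_adj = 0"
    using chi_CF_pn_le_card[of F intersection_adj id] by (simp add: pointed_CF_coloring_def)
  thus ?thesis by simp
next
  case False
  obtain s c a where s: "s > 0" and discs:
    "\<forall>C\<in>F. cball (c C) (a C) \<subseteq> C \<and> C \<subseteq> cball (c C) (\<rho> * a C) \<and> s \<le> a C \<and> a C \<le> 2 * k * s"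
    by (rule fat_family_discs[OF fin False fat ratio])
  define M where "M = nat \<lceil>32 * \<rho> * k\<rceil> + 1"
  have \<rho>k: "\<rho> * k \<ge> 1" using mult_mono[OF \<rho> k] \<rho> by simp
  have "chi_CF_pn F intersection_adj \<le> 2 * M\<^sup>2 + 1"
  proof (rule chi_CF_pn_uniform_discs[OF fin, where h = "s / 2" and R = "4 * \<rho> * k" and c = c])
    show "8 * (4 * \<rho> * k) + 1 \<le> real M" unfolding M_def by linarith
    fix C assume C: "C \<in> F"
    have "cball (c C) (2 * (s / 2)) \<subseteq> cball (c C) (a C)" using discs[rule_format, OF C] by auto
    moreover have "\<rho> * a C \<le> 4 * \<rho> * k * (s / 2)"
      using mult_left_mono[of "a C" "2 * k * s" \<rho>] discs[rule_format, OF C] \<rho> by simp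
    hence "cball (c C) (\<rho> * a C) \<subseteq> cball (c C) (4 * \<rho> * k * (s / 2))" by auto
    ultimately show "cball (c C) (2 * (s / 2)) \<subseteq> C \<and> C \<subseteq> cball (c C) (4 * \<rho> * k * (s / 2))"
      using discs[rule_format, OF C] by blast
  qed (use s \<rho>k in auto)
  hence "real (chi_CF_pn F intersection_adj) \<le> real (2 * M\<^sup>2 + 1)" by (simp only: of_nat_le_iff)
  also have "\<dots> \<le> 2313 * (\<rho> * k)\<^sup>2"
  proof (rule pointed_palette_bound[OF \<rho>k])
    show "real M \<le> 32 * (\<rho> * k) + 2" unfolding M_def using \<rho>k by linarith
  qed
  finally show ?thesis by (simp add: power_mult_distrib mult_ac)
qed

lemma floor_log2_power_bounds:
  fixes x :: real
  assumes "x \<ge> 1"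
  shows "2 ^ nat \<lfloor>log 2 x\<rfloor> \<le> x" "x < 2 ^ (nat \<lfloor>log 2 x\<rfloor> + 1)"
proof -
  define n where "n = nat \<lfloor>log 2 x\<rfloor>"
  have "0 \<le> log 2 x" using assms by simp
  hence n: "real_of_int \<lfloor>log 2 x\<rfloor> = real n" by (simp add: n_def)
  have "2 powr real n \<le> x" "x < 2 powr real (n + 1)"
    using floor_log_eq_powr_iff[of x 2 "\<lfloor>log 2 x\<rfloor>"] assms n by (simp_all add: add.commute)
  moreover have "2 powr real n = 2 ^ n" "2 powr real (n + 1) = 2 ^ (n + 1)"
    by (simp_all only: powr_realpow zero_less_numeral)
  ultimately show "2 ^ nat \<lfloor>log 2 x\<rfloor> \<le> x" "x < 2 ^ (nat \<lfloor>log 2 x\<rfloor> + 1)"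
    unfolding n_def by simp_all
qed

lemma chi_CF_cn_fat_family:
  assumes \<rho>: "\<rho> \<ge> 1" and k: "k \<ge> 2" and fin: "finite F" and fat: "\<forall>C\<in>F. fat \<rho> C"
    and ratio: "size_ratio \<rho> F \<le> k"
  shows "real (chi_CF_cn F intersection_adj) \<le> 1460 * \<rho>\<^sup>2 * ln k"
proof (cases "F = {}")
  case True
  hence "chi_CF_cn F intersection_adj = 0"
    using chi_CF_cn_le_card[of F intersection_adj id] by (simp add: closed_CF_coloring_def)
  thus ?thesis using k by simp
next
  case False
  obtain s c a where s: "s > 0" and discs:
    "\<forall>C\<in>F. cball (c C) (a C) \<subseteq> C \<and> C \<subseteq> cball (c C) (\<rho> * a C) \<and> s \<le> a C \<and> a C \<le> 2 * k * s"
    by (rule fat_family_discs[OF fin False fat ratio])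
  define \<kappa> where "\<kappa> C = nat \<lfloor>log 2 (a C / s)\<rfloor>" for C
  define h :: "nat \<Rightarrow> real" where "h j = 2 ^ j * s / 2" for j
  define L where "L = nat \<lfloor>log 2 (2 * k)\<rfloor>"
  define M where "M = nat \<lceil>16 * \<rho>\<rceil> + 1"
  have "chi_CF_cn F intersection_adj \<le> (L + 1) * M\<^sup>2 + 1"
  proof (rule chi_CF_cn_levelled_discs[OF fin, where h = h and R = "4 * \<rho>" and c = c and \<kappa> = \<kappa>])
    show "4 * (4 * \<rho>) + 1 \<le> real M" unfolding M_def by linarith
    fix C assume C: "C \<in> F"
    have ratio_C: "1 \<le> a C / s" "a C / s \<le> 2 * k"
      using discs[rule_format, OF C] s by (simp_all add: divide_le_eq)
    show "\<kappa> C \<le> L"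
      unfolding \<kappa>_def L_def using ratio_C by (intro nat_mono floor_mono) simp
    have "2 ^ \<kappa> C \<le> a C / s" "a C / s < 2 ^ (\<kappa> C + 1)"
      unfolding \<kappa>_def using floor_log2_power_bounds[OF ratio_C(1)] by simp_all
    hence scale: "2 * h (\<kappa> C) \<le> a C" "a C \<le> 4 * h (\<kappa> C)"
      using s by (simp_all add: h_def field_simps)
    have "cball (c C) (2 * h (\<kappa> C)) \<subseteq> cball (c C) (a C)" using scale by auto
    moreover have "\<rho> * a C \<le> 4 * \<rho> * h (\<kappa> C)"
      using mult_left_mono[OF scale(2), of \<rho>] \<rho> by simp
    hence "cball (c C) (\<rho> * a C) \<subseteq> cball (c C) (4 * \<rho> * h (\<kappa> C))" by auto
    ultimately show "cball (c C) (2 * h (\<kappa> C)) \<subseteq> C \<and> C \<subseteq> cball (c C) (4 * \<rho> * h (\<kappa> C))"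
      using discs[rule_format, OF C] by blast
  qed (use s \<rho> in \<open>auto simp: h_def\<close>)
  hence "real (chi_CF_cn F intersection_adj) \<le> real ((L + 1) * M\<^sup>2 + 1)" by (simp only: of_nat_le_iff)
  also have "\<dots> \<le> 1460 * \<rho>\<^sup>2 * ln k"
  proof (rule closed_palette_bound[OF \<rho> k])
    show "real L \<le> log 2 (2 * k)" unfolding L_def using k by simp
    show "real M \<le> 16 * \<rho> + 2" unfolding M_def using \<rho> by linarith
  qed
  finally show ?thesis .
qed

theorem proposition1p7:
  "\<exists>c1 c2 :: real. \<forall>(\<rho>::real) (k::real) (F::complex set set).
     \<rho> \<ge> 1 \<longrightarrow> k \<ge> 1 \<longrightarrow> finite F \<longrightarrow> (\<forall>C\<in>F. fat \<rho> C) \<longrightarrow>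
     size_ratio \<rho> F \<le> k \<longrightarrow>
       real (chi_CF_pn F intersection_adj) \<le> c1 * k\<^sup>2 * \<rho>\<^sup>2 \<and>
       (k \<ge> 2 \<longrightarrow> real (chi_CF_cn F intersection_adj) \<le> c2 * \<rho>\<^sup>2 * ln k)"
  using chi_CF_pn_fat_family chi_CF_cn_fat_family by blast

end
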